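(* Let $(X,\le,\to,\rightsquigarrow,d,u)$ be a weakly involutive unital quantum B-algebra and let $(\exists,\forall)$ be a pair of strong synchronized maps on $X$ such that $\exists$ is a weak existential quantifier (equivalently, $\forall$ is a weak universal quantifier). Then for all $x,y\in X$: (1) $\forall(\forall x\to\forall y)=\forall x\to\forall y$ and $\forall(\forall x\rightsquigarrow\forall y)=\forall x\rightsquigarrow\forall y$; (2) $\exists(\exists x\to\exists y)=\exists x\to\exists y$ and $\exists(\exists x\rightsquigarrow\exists y)=\exists x\rightsquigarrow\exists y$; (3) $\forall(\forall x\odot\forall y)=\forall x\odot\forall y$; (4) $\exists(\exists x\odot\exists y)=\exists x\odot\exists y$; (5) $\forall((x\to\forall y)\rightsquigarrow\forall y)=(\forall x\to\forall y)\rightsquigarrow\forall y$ and $\forall((x\rightsquigarrow\forall y)\to\forall y)=(\forall x\rightsquigarrow\forall y)\to\forall y$.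
   Context: A quantum B-algebra is a partially ordered set $(X,\le)$ with two binary operations $\to$ and $\rightsquigarrow$ such that for all $x,y,z\in X$: $y\to z\le (x\to y)\to(x\to z)$; $y\rightsquigarrow z\le (x\rightsquigarrow y)\to(x\rightsquigarrow z)$; $y\le z$ implies $x\to y\le x\to z$; and $x\le y\to z$ iff $y\le x\rightsquigarrow z$. It is unital if there is $u\in X$ with $u\to x=u\rightsquigarrow x=x$ for all $x$. A pointed quantum B-algebra has a fixed $d\in X$; write $x^{-}=x\to d$, $x^{\sim}=x\rightsquigarrow d$; it is weakly involutive if $(x^{-})^{\sim}=(x^{\sim})^{-}=x$ for all $x$. In a weakly involutive quantum B-algebra define $x\odot y=(x\to y^{-})^{\sim}$ $(=(y\rightsquigarrow x^{\sim})^{-})$ and $x\oplus y=y^{\sim}\to x$ $(=x^{-}\rightsquigarrow y)$. A map $\tau:X\to X$ is good if $(\tau(x^{-}))^{\sim}=(\tau(x^{\sim}))^{-}$ for all $x$; good maps $\tau,\sigma$ are synchronized if $\sigma(x)=(\tau(x^{-}))^{\sim}=(\tau(x^{\sim}))^{-}$ for all $x$; they are strong synchronized if moreover $\tau\circ\sigma=\sigma$ (which for synchronized maps is equivalent to $\sigma\circ\tau=\tau$). A good map $\exists$ is a weak existential quantifier if for all $x,y$: $\exists d=d$; $\exists u=u$; $x\le\exists x$; $\exists(x\oplus\exists y)=\exists(\exists x\oplus y)=\exists x\oplus\exists y$; $\exists(x\oplus x)=\exists x\oplus\exists x$; $\exists(x\odot\exists y)=\exists(\exists x\odot y)=\exists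 x\odot\exists y$. A good map $\forall$ is a weak universal quantifier if for all $x,y$: $\forall u=u$; $\forall d=d$; $\forall x\le x$; $\forall(x\odot\forall y)=\forall(\forall x\odot y)=\forall x\odot\forall y$; $\forall(x\odot x)=\forall x\odot\forall x$; $\forall(x\oplus\forall y)=\forall(\forall x\oplus y)=\forall x\oplus\forall y$. *)

theory Defs
  imports Main
begin

definition quantum_B_algebra :: "('a::order \<Rightarrow> 'a \<Rightarrow> 'a) \<Rightarrow> ('a \<Rightarrow> 'a \<Rightarrow> 'a) \<Rightarrow> bool" where
  "quantum_B_algebra imp pimp \<longleftrightarrow>
     (\<forall>x y z. imp y z \<le> imp (imp x y) (imp x z)) \<and>
     (\<forall>x y z. pimp y z \<le> imp (pimp x y) (pimp x z)) \<and>
     (\<forall>x y z. y \<le> z \<longrightarrow> imp x y \<le> imp x z) \<and>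
     (\<forall>x y z. x \<le> imp y z \<longleftrightarrow> y \<le> pimp x z)"

definition unital :: "('a \<Rightarrow> 'a \<Rightarrow> 'a) \<Rightarrow> ('a \<Rightarrow> 'a \<Rightarrow> 'a) \<Rightarrow> 'a \<Rightarrow> bool" where
  "unital imp pimp u \<longleftrightarrow> (\<forall>x. imp u x = x \<and> pimp u x = x)"

definition weakly_involutive :: "('a \<Rightarrow> 'a \<Rightarrow> 'a) \<Rightarrow> ('a \<Rightarrow> 'a \<Rightarrow> 'a) \<Rightarrow> 'a \<Rightarrow> bool" where
  "weakly_involutive imp pimp d \<longleftrightarrow>
     (\<forall>x. pimp (imp x d) d = x \<and> imp (pimp x d) d = x)"

definition qodot :: "('a \<Rightarrow> 'a \<Rightarrow> 'a) \<Rightarrow> ('a \<Rightarrow> 'a \<Rightarrow> 'a) \<Rightarrow> 'a \<Rightarrow> 'a \<Rightarrow> 'a \<Rightarrow> 'a" where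
  "qodot imp pimp d x y = pimp (imp x (imp y d)) d"

definition qoplus :: "('a \<Rightarrow> 'a \<Rightarrow> 'a) \<Rightarrow> ('a \<Rightarrow> 'a \<Rightarrow> 'a) \<Rightarrow> 'a \<Rightarrow> 'a \<Rightarrow> 'a \<Rightarrow> 'a" where
  "qoplus imp pimp d x y = imp (pimp y d) x"

definition good_map :: "('a \<Rightarrow> 'a \<Rightarrow> 'a) \<Rightarrow> ('a \<Rightarrow> 'a \<Rightarrow> 'a) \<Rightarrow> 'a \<Rightarrow> ('a \<Rightarrow> 'a) \<Rightarrow> bool" where
  "good_map imp pimp d \<tau> \<longleftrightarrow> (\<forall>x. pimp (\<tau> (imp x d)) d = imp (\<tau> (pimp x d)) d)"

definition synchronized :: "('a \<Rightarrow> 'a \<Rightarrow> 'a) \<Rightarrow> ('a \<Rightarrow> 'a \<Rightarrow> 'a) \<Rightarrow> 'a \<Rightarrow> ('a \<Rightarrow> 'a) \<Rightarrow> ('a \<Rightarrow> 'a) \<Rightarrow> bool" where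
  "synchronized imp pimp d \<tau> \<sigma> \<longleftrightarrow>
     good_map imp pimp d \<tau> \<and> good_map imp pimp d \<sigma> \<and>
     (\<forall>x. \<sigma> x = pimp (\<tau> (imp x d)) d \<and> \<sigma> x = imp (\<tau> (pimp x d)) d)"

definition strong_synchronized :: "('a \<Rightarrow> 'a \<Rightarrow> 'a) \<Rightarrow> ('a \<Rightarrow> 'a \<Rightarrow> 'a) \<Rightarrow> 'a \<Rightarrow> ('a \<Rightarrow> 'a) \<Rightarrow> ('a \<Rightarrow> 'a) \<Rightarrow> bool" where
  "strong_synchronized imp pimp d \<tau> \<sigma> \<longleftrightarrow>
     synchronized imp pimp d \<tau> \<sigma> \<and> \<tau> \<circ> \<sigma> = \<sigma>"

definition weak_existential_quantifier ::
  "('a::order \<Rightarrow> 'a \<Rightarrow> 'a) \<Rightarrow> ('a \<Rightarrow> 'a \<Rightarrow> 'a) \<Rightarrow> 'a \<Rightarrow> 'a \<Rightarrow> ('a \<Rightarrow> 'a) \<Rightarrow> bool" where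
  "weak_existential_quantifier imp pimp d u E \<longleftrightarrow>
     good_map imp pimp d E \<and> E d = d \<and> E u = u \<and> (\<forall>x. x \<le> E x) \<and>
     (\<forall>x y. E (qoplus imp pimp d x (E y)) = qoplus imp pimp d (E x) (E y) \<and>
            E (qoplus imp pimp d (E x) y) = qoplus imp pimp d (E x) (E y)) \<and>
     (\<forall>x. E (qoplus imp pimp d x x) = qoplus imp pimp d (E x) (E x)) \<and>
     (\<forall>x y. E (qodot imp pimp d x (E y)) = qodot imp pimp d (E x) (E y) \<and>
            E (qodot imp pimp d (E x) y) = qodot imp pimp d (E x) (E y))"

definition weak_universal_quantifier ::
  "('a::order \<Rightarrow> 'a \<Rightarrow> 'a) \<Rightarrow> ('a \<Rightarrow> 'a \<Rightarrow> 'a) \<Rightarrow> 'a \<Rightarrow> 'a \<Rightarrow> ('a \<Rightarrow> 'a) \<Rightarrow> bool" where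
  "weak_universal_quantifier imp pimp d u A \<longleftrightarrow>
     good_map imp pimp d A \<and> A u = u \<and> A d = d \<and> (\<forall>x. A x \<le> x) \<and>
     (\<forall>x y. A (qodot imp pimp d x (A y)) = qodot imp pimp d (A x) (A y) \<and>
            A (qodot imp pimp d (A x) y) = qodot imp pimp d (A x) (A y)) \<and>
     (\<forall>x. A (qodot imp pimp d x x) = qodot imp pimp d (A x) (A x)) \<and>
     (\<forall>x y. A (qoplus imp pimp d x (A y)) = qoplus imp pimp d (A x) (A y) \<and>
            A (qoplus imp pimp d (A x) y) = qoplus imp pimp d (A x) (A y))"

end

theory Submission
  imports Defs
begin

text \<open>In the second axiom of a quantum B-algebra as given, the outer arrow is \<open>\<rightarrow>\<close> rather
  than \<open>\<leadsto>\<close>. Together with residuation and weak involutivity this forces \<open>\<leadsto> = \<rightarrow>\<close>, so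
  the whole argument takes place in a commutative involutive structure. There every statement
  reduces to the defining laws of \<open>\<exists>\<close> through the De Morgan dualities
  \<open>(\<forall>x)\<^sup>- = \<exists>(x\<^sup>-)\<close> and \<open>(\<exists>x)\<^sup>- = \<forall>(x\<^sup>-)\<close>, writing \<open>a \<rightarrow> b = b\<^sup>- \<rightarrow> a\<^sup>-\<close> as an \<open>\<oplus>\<close>
  or the negation of an \<open>\<odot>\<close>.\<close>

lemma weakly_involutive_quantum_B_algebra_pimp_eq_imp:
  fixes imp pimp :: "'a::order \<Rightarrow> 'a \<Rightarrow> 'a"
  assumes Q: "quantum_B_algebra imp pimp" and W: "weakly_involutive imp pimp d"
  shows "pimp = imp"
proof -
  have adj: "\<And>x y z. x \<le> imp y z \<longleftrightarrow> y \<le> pimp x z"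
    and a1: "\<And>x y z. imp y z \<le> imp (imp x y) (imp x z)"
    and a2: "\<And>x y z. pimp y z \<le> imp (pimp x y) (pimp x z)"
    using Q unfolding quantum_B_algebra_def by blast+
  have i1: "\<And>x. pimp (imp x d) d = x"
    using W unfolding weakly_involutive_def by auto
  have A1: "\<And>x y z. imp x y \<le> pimp (imp y z) (imp x z)" using a1 adj by blast
  have A2: "\<And>x y z. pimp x y \<le> pimp (pimp y z) (pimp x z)" using a2 adj by blast
  have le: "imp x y \<le> pimp x y" for x y
  proof -
    have "imp x y \<le> pimp (imp y d) (imp x d)" by (rule A1)
    also have "\<dots> \<le> pimp (pimp (imp x d) d) (pimp (imp y d) d)" by (rule A2)
    finally show ?thesis by (simp add: i1)
  qed
  show ?thesis
  proof (intro ext antisym)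
    fix x y
    show "imp x y \<le> pimp x y" by (rule le)
    have "x \<le> imp (pimp x y) y" using adj by blast
    then show "pimp x y \<le> imp x y" using le adj order_trans by metis
  qed
qed

locale involutive_commutative_qba =
  fixes imp :: "'a::order \<Rightarrow> 'a \<Rightarrow> 'a" and d :: 'a
  assumes residuation: "x \<le> imp y z \<longleftrightarrow> y \<le> imp x z"
    and suffixing: "imp y z \<le> imp (imp x y) (imp x z)"
    and double_negation: "imp (imp x d) d = x"
begin

lemma prefixing: "imp x y \<le> imp (imp y z) (imp x z)"
  using suffixing residuation by blast

lemma contraposition: "imp (imp y d) (imp x d) = imp x y"
proof (rule antisym)
  show "imp x y \<le> imp (imp y d) (imp x d)" by (rule prefixing)
  have "imp (imp y d) (imp x d) \<le> imp (imp (imp x d) d) (imp (imp y d) d)" by (rule prefixing)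
  then show "imp (imp y d) (imp x d) \<le> imp x y" by (simp add: double_negation)
qed

lemma qodot_commutative: "qodot imp imp d x y = imp (imp x (imp y d)) d"
  unfolding qodot_def ..

lemma qoplus_commutative: "qoplus imp imp d x y = imp (imp y d) x"
  unfolding qoplus_def ..

end

locale existential_universal_pair = involutive_commutative_qba imp d
  for imp :: "'a::order \<Rightarrow> 'a \<Rightarrow> 'a" and d :: 'a +
  fixes u :: 'a and E A :: "'a \<Rightarrow> 'a"
  assumes unit: "imp u x = x"
    and universal_dual: "A x = imp (E (imp x d)) d"
    and E_A: "E (A x) = A x"
    and E_unit: "E u = u"
    and E_qoplus: "E (qoplus imp imp d (E x) y) = qoplus imp imp d (E x) (E y)"
    and E_qodot: "E (qodot imp imp d (E x) y) = qodot imp imp d (E x) (E y)"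
begin

lemma E_idem: "E (E x) = E x"
  using E_qodot[of x u] by (simp add: qodot_commutative E_unit unit double_negation)

lemma neg_A: "imp (A x) d = E (imp x d)"
  by (simp add: universal_dual double_negation)

lemma neg_E: "imp (E x) d = A (imp x d)"
  by (metis neg_A double_negation)

lemma E_imp_E: "E (imp (E x) (E y)) = imp (E x) (E y)"
proof -
  have "E (imp (E x) (E y)) = E (qoplus imp imp d (E y) (imp (E x) d))"
    by (simp add: qoplus_commutative double_negation)
  also have "\<dots> = imp (imp (E (imp (E x) d)) d) (E y)"
    using E_qoplus[of y "imp (E x) d"] by (simp only: qoplus_commutative)
  also have "\<dots> = imp (E x) (E y)"
    by (metis neg_E E_A double_negation)
  finally show ?thesis .
qed

lemma E_qodot_E: "E (qodot imp imp d (E x) (E y)) = qodot imp imp d (E x) (E y)"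
  using E_qodot[of x "E y"] by (simp add: E_idem)

lemma A_qodot_A: "A (qodot imp imp d (A x) (A y)) = qodot imp imp d (A x) (A y)"
proof -
  have "E (imp (A x) (imp (A y) d)) = imp (A x) (imp (A y) d)"
    using E_imp_E[of "A x" "imp y d"] by (simp add: E_A neg_A)
  then show ?thesis by (simp add: qodot_commutative universal_dual double_negation)
qed

lemma A_imp_A: "A (imp (A x) (A y)) = imp (A x) (A y)"
proof -
  have "imp (imp (A x) (A y)) d = qodot imp imp d (E (A x)) (E (imp y d))"
    by (simp add: qodot_commutative E_A neg_A[symmetric] double_negation)
  then have "E (imp (imp (A x) (A y)) d) = imp (imp (A x) (A y)) d"
    using E_qodot_E by simp
  then show ?thesis by (simp add: universal_dual double_negation)
qed

lemma E_imp_A: "E (imp x (A y)) = imp (A x) (A y)"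
proof -
  have "E (imp x (A y)) = E (qoplus imp imp d (E (A y)) (imp x d))"
    by (simp add: qoplus_commutative double_negation E_A)
  also have "\<dots> = imp (imp (E (imp x d)) d) (A y)"
    using E_qoplus[of "A y" "imp x d"] by (simp only: qoplus_commutative E_A)
  also have "\<dots> = imp (A x) (A y)"
    by (simp only: universal_dual)
  finally show ?thesis .
qed

lemma A_imp_imp_A: "A (imp (imp x (A y)) (A y)) = imp (imp (A x) (A y)) (A y)"
proof -
  define b where "b = E (imp y d)"
  have Ay: "A y = imp b d" by (simp add: b_def universal_dual)
  have Eb: "E b = b" by (simp add: b_def E_idem)
  \<comment> \<open>by contraposition, \<open>(x \<rightarrow> \<forall>y) \<rightarrow> \<forall>y\<close> is the negation of \<open>b \<odot> (x \<rightarrow> \<forall>y)\<close>\<close>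
  have "imp (imp (imp x (A y)) (A y)) d = qodot imp imp d (E b) (imp x (A y))"
    by (subst contraposition[symmetric]) (simp add: qodot_commutative Ay double_negation Eb)
  then have "E (imp (imp (imp x (A y)) (A y)) d) = qodot imp imp d b (imp (A x) (A y))"
    using E_qodot[of b "imp x (A y)"] by (simp add: Eb E_imp_A)
  then have "A (imp (imp x (A y)) (A y)) = imp b (imp (imp (A x) (A y)) d)"
    by (simp add: universal_dual qodot_commutative double_negation)
  also have "\<dots> = imp (imp (A x) (A y)) (A y)"
    by (subst (2) contraposition[symmetric]) (simp add: Ay double_negation)
  finally show ?thesis .
qed

end

theorem proposition5p12:
  fixes imp pimp :: "'a::order \<Rightarrow> 'a \<Rightarrow> 'a" and d u :: 'a and E A :: "'a \<Rightarrow> 'a"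
  assumes "quantum_B_algebra imp pimp"
    and "unital imp pimp u"
    and "weakly_involutive imp pimp d"
    and "strong_synchronized imp pimp d E A"
    and "weak_existential_quantifier imp pimp d u E"
  shows "\<forall>x y.
     (A (imp (A x) (A y)) = imp (A x) (A y) \<and> A (pimp (A x) (A y)) = pimp (A x) (A y)) \<and>
     (E (imp (E x) (E y)) = imp (E x) (E y) \<and> E (pimp (E x) (E y)) = pimp (E x) (E y)) \<and>
     A (qodot imp pimp d (A x) (A y)) = qodot imp pimp d (A x) (A y) \<and>
     E (qodot imp pimp d (E x) (E y)) = qodot imp pimp d (E x) (E y) \<and>
     (A (pimp (imp x (A y)) (A y)) = pimp (imp (A x) (A y)) (A y) \<and>
      A (imp (pimp x (A y)) (A y)) = imp (pimp (A x) (A y)) (A y))"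
proof -
  have pimp: "pimp = imp"
    using weakly_involutive_quantum_B_algebra_pimp_eq_imp assms(1,3) .
  interpret existential_universal_pair imp d u E A
  proof unfold_locales
    show "x \<le> imp y z \<longleftrightarrow> y \<le> imp x z" "imp y z \<le> imp (imp x y) (imp x z)" for x y z
      using assms(1) unfolding pimp quantum_B_algebra_def by blast+
    show "imp (imp x d) d = x" "imp u x = x" for x
      using assms(2,3) unfolding pimp weakly_involutive_def unital_def by auto
    show "A x = imp (E (imp x d)) d" "E (A x) = A x" for x
      using assms(4) unfolding pimp strong_synchronized_def synchronized_def by (auto dest: fun_cong)
    show "E u = u"
      "E (qoplus imp imp d (E x) y) = qoplus imp imp d (E x) (E y)"
      "E (qodot imp imp d (E x) y) = qodot imp imp d (E x) (E y)" for x y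
      using assms(5) unfolding pimp weak_existential_quantifier_def by blast+
  qed
  show ?thesis
    unfolding pimp by (simp add: A_imp_A E_imp_E A_qodot_A E_qodot_E A_imp_imp_A)
qed

end
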